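(* Let $n\ge1$, $l\ge n$, let $(a_{ik})$ be a real $l\times n$ matrix, let $E_1,\dots,E_l\subset\mathbb{R}^n$ be measurable sets of finite measure, and let $1\le t\le n$. Then $$\sup_{y_j\in\mathcal{S}_{e_t}(E_j),\,j=1,\dots,l}\det\Big(0,\sum_{i=1}^{l}a_{i1}y_i,\dots,\sum_{i=1}^{l}a_{in}y_i\Big)\le\sup_{y_j\in E_j,\,j=1,\dots,l}\det\Big(0,\sum_{i=1}^{l}a_{i1}y_i,\dots,\sum_{i=1}^{l}a_{in}y_i\Big).$$ In particular (taking appropriate matrices $(a_{ik})$), $\sup_{y_j\in\mathcal{S}_{e_t}(E_j)}\det(0,y_1,\dots,y_n)\le\sup_{y_j\in E_j}\det(0,y_1,\dots,y_n)$ and $\sup_{y_j\in\mathcal{S}_{e_t}(E_j)}\det(y_1,\dots,y_{n+1})\le\sup_{y_j\in E_j}\det(y_1,\dots,y_{n+1})$.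
   Context: $\{e_1,\dots,e_n\}$ is the standard basis of $\mathbb{R}^n$. For $z_1,\dots,z_n\in\mathbb{R}^n$, $\det(0,z_1,\dots,z_n)$ denotes $|\det M|$ where $M$ is the $n\times n$ matrix with columns $z_1,\dots,z_n$. For $y_1,\dots,y_{n+1}\in\mathbb{R}^n$, $\det(y_1,\dots,y_{n+1})$ denotes the absolute value of the determinant of the matrix with columns $y_1-y_{n+1},\dots,y_n-y_{n+1}$ (equal to $n!$ times the volume of the simplex with these vertices). For a unit vector $u\in\mathbb{R}^n$ and a measurable $A\subset\mathbb{R}^n$, the Steiner symmetrisation is $\mathcal{S}_u(A)=\{tu+y:\ y\in u^\perp,\ A\cap(\mathbb{R}u+y)\neq\emptyset,\ |t|\le |A\cap(\mathbb{R}u+y)|/2\}$, where $|A\cap(\mathbb{R}u+y)|$ is one-dimensional Lebesgue measure on the line $\mathbb{R}u+y$. *)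

theory Defs
  imports "HOL-Analysis.Analysis"
begin

text \<open>The one-dimensional measure of A on the line R u + y is the Lebesgue
  measure of the parameter set {s. s u + y in A} (u is a unit vector).\<close>
definition steiner :: "'a::euclidean_space \<Rightarrow> 'a set \<Rightarrow> 'a set" where
  "steiner u A = {t *\<^sub>R u + y | t y.
       y \<bullet> u = 0 \<and> A \<inter> range (\<lambda>s. s *\<^sub>R u + y) \<noteq> {} \<and>
       ennreal \<bar>t\<bar> \<le> emeasure lebesgue {s::real. s *\<^sub>R u + y \<in> A} / 2}"

definition det0 :: "('n::finite \<Rightarrow> real^'n) \<Rightarrow> real" where
  "det0 z = \<bar>det (\<chi> r k. z k $ r :: real^'n^'n)\<bar>"

end

theory Submission
  imports Defs
begin

(* Write each point of the symmetral of E_j as t_j e_t + p_j with p_j orthogonal to e_t.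
   With the p_j fixed, the determinant is the absolute value of a linear form
   sum_j w_j t_j (expand along row t). On the line through p_j the set E_j has measure
   at least 2|t_j|, so it contains two points almost 2|t_j| apart; taking in each
   coordinate the larger or the smaller of them according to the sign of w_j gives two
   admissible values of the linear form whose difference is almost 2|sum_j w_j t_j|,
   so one of them has modulus almost |sum_j w_j t_j|. *)

lemma emeasure_le_of_diff_bounded:
  fixes F :: "real set"
  assumes "F \<noteq> {}" and diff: "\<And>a b. a \<in> F \<Longrightarrow> b \<in> F \<Longrightarrow> b - a \<le> d"
  shows "emeasure lebesgue F \<le> ennreal d"
proof -
  obtain x0 where x0: "x0 \<in> F" using assms(1) by auto
  have "bdd_below F"
    using diff x0 by (intro bdd_belowI[of _ "x0 - d"]) (smt (verit))
  have "F \<subseteq> {Inf F .. Inf F + d}"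
  proof
    fix x assume x: "x \<in> F"
    have "x - d \<le> Inf F"
      using diff x by (intro cInf_greatest[OF assms(1)]) (smt (verit))
    with cInf_lower[OF x \<open>bdd_below F\<close>] show "x \<in> {Inf F .. Inf F + d}" by auto
  qed
  then have "emeasure lebesgue F \<le> emeasure lebesgue {Inf F .. Inf F + d}"
    by (intro emeasure_mono) auto
  also have "\<dots> = ennreal d"
    using diff[OF x0 x0] by simp
  finally show ?thesis .
qed

lemma half_measure_le_diff:
  fixes F :: "real set"
  assumes "F \<noteq> {}" and half: "ennreal \<bar>t\<bar> \<le> emeasure lebesgue F / 2" and "e > 0"
  obtains a b where "a \<in> F" "b \<in> F" "2 * \<bar>t\<bar> - e < b - a"
proof (rule ccontr)
  assume "\<not> thesis"
  with that have diff: "\<And>a b. a \<in> F \<Longrightarrow> b \<in> F \<Longrightarrow> b - a \<le> 2 * \<bar>t\<bar> - e"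
    by (meson not_less)
  define d where "d = 2 * \<bar>t\<bar> - e"
  have "d \<ge> 0"
    using diff assms(1) unfolding d_def by fastforce
  have "ennreal \<bar>t\<bar> \<le> ennreal d / 2"
    using half emeasure_le_of_diff_bounded[OF assms(1) diff]
    unfolding d_def by (meson divide_right_mono_ennreal order.trans)
  also have "\<dots> = ennreal (d / 2)"
    using \<open>d \<ge> 0\<close> divide_ennreal[of d 2] by simp
  finally have "\<bar>t\<bar> \<le> d / 2"
    using \<open>d \<ge> 0\<close> by (simp add: ennreal_le_iff)
  with \<open>e > 0\<close> show False unfolding d_def by simp
qed

lemma abs_linear_form_le_SUP_of_half_measure:
  fixes F :: "'i::finite \<Rightarrow> real set" and w t :: "'i \<Rightarrow> real"
  assumes ne: "\<And>i. F i \<noteq> {}"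
    and half: "\<And>i. ennreal \<bar>t i\<bar> \<le> emeasure lebesgue (F i) / 2"
  shows "ereal \<bar>\<Sum>i\<in>UNIV. w i * t i\<bar> \<le> (SUP s\<in>Pi UNIV F. ereal \<bar>\<Sum>i\<in>UNIV. w i * s i\<bar>)"
    (is "_ \<le> ?S")
proof (rule ereal_le_epsilon2)
  fix e :: real assume "e > 0"
  define L where "L = (\<Sum>i\<in>UNIV. \<bar>w i\<bar>)"
  have "L \<ge> 0" unfolding L_def by (simp add: sum_nonneg)
  define \<delta> where "\<delta> = e / (L + 1)"
  have "\<delta> > 0" and "\<delta> * L \<le> e"
    using \<open>e > 0\<close> \<open>L \<ge> 0\<close> by (auto simp: \<delta>_def field_simps)
  have "\<forall>i. \<exists>lo hi. lo \<in> F i \<and> hi \<in> F i \<and> 2 * \<bar>t i\<bar> - \<delta> < hi - lo"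
    using half_measure_le_diff[OF ne half \<open>\<delta> > 0\<close>] by metis
  then obtain lo hi where lohi: "\<And>i. lo i \<in> F i" "\<And>i. hi i \<in> F i"
    "\<And>i. 2 * \<bar>t i\<bar> - \<delta> < hi i - lo i"
    by (metis choice)
  define sp where "sp i = (if w i \<ge> 0 then hi i else lo i)" for i
  define sm where "sm i = (if w i \<ge> 0 then lo i else hi i)" for i
  define P where "P = (\<Sum>i\<in>UNIV. w i * sp i)"
  define M where "M = (\<Sum>i\<in>UNIV. w i * sm i)"
  have "P - M = (\<Sum>i\<in>UNIV. \<bar>w i\<bar> * (hi i - lo i))"
    unfolding P_def M_def sum_subtractf[symmetric]
    by (rule sum.cong) (auto simp: sp_def sm_def algebra_simps)
  also have "\<dots> \<ge> (\<Sum>i\<in>UNIV. \<bar>w i\<bar> * (2 * \<bar>t i\<bar> - \<delta>))"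
    using lohi(3) by (intro sum_mono mult_left_mono) (auto intro: less_imp_le)
  finally have "2 * (\<Sum>i\<in>UNIV. \<bar>w i\<bar> * \<bar>t i\<bar>) - \<delta> * L \<le> P - M"
    unfolding L_def by (simp add: algebra_simps sum_subtractf sum_distrib_left sum_distrib_right)
  moreover have "\<bar>\<Sum>i\<in>UNIV. w i * t i\<bar> \<le> (\<Sum>i\<in>UNIV. \<bar>w i\<bar> * \<bar>t i\<bar>)"
    by (rule order.trans[OF sum_abs]) (simp add: abs_mult)
  moreover have "P - M \<le> 2 * max \<bar>P\<bar> \<bar>M\<bar>"
    by (auto simp: max_def abs_if)
  ultimately have "\<bar>\<Sum>i\<in>UNIV. w i * t i\<bar> \<le> max \<bar>P\<bar> \<bar>M\<bar> + e"
    using \<open>\<delta> * L \<le> e\<close> \<open>e > 0\<close> by linarith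
  moreover have "ereal \<bar>P\<bar> \<le> ?S" "ereal \<bar>M\<bar> \<le> ?S"
    unfolding P_def M_def using lohi(1,2)
    by (auto intro!: SUP_upper simp: sp_def sm_def)
  ultimately have "ereal \<bar>\<Sum>i\<in>UNIV. w i * t i\<bar> \<le> ereal (max \<bar>P\<bar> \<bar>M\<bar>) + ereal e"
    and "ereal (max \<bar>P\<bar> \<bar>M\<bar>) \<le> ?S"
    by (auto simp: max_def)
  then show "ereal \<bar>\<Sum>i\<in>UNIV. w i * t i\<bar> \<le> ?S + ereal e"
    by (meson add_right_mono order_trans)
qed

lemma steinerE:
  assumes "x \<in> steiner u A"
  obtains t p where "x = t *\<^sub>R u + p" "p \<bullet> u = 0" "{s. s *\<^sub>R u + p \<in> A} \<noteq> {}"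
    "ennreal \<bar>t\<bar> \<le> emeasure lebesgue {s. s *\<^sub>R u + p \<in> A} / 2"
  using assms unfolding steiner_def by blast

lemma Pi_steinerE:
  assumes "y \<in> Pi UNIV (\<lambda>i. steiner u (A i))"
  obtains \<tau> p where "\<And>i. y i = \<tau> i *\<^sub>R u + p i" "\<And>i. p i \<bullet> u = 0"
    "\<And>i. {s. s *\<^sub>R u + p i \<in> A i} \<noteq> {}"
    "\<And>i. ennreal \<bar>\<tau> i\<bar> \<le> emeasure lebesgue {s. s *\<^sub>R u + p i \<in> A i} / 2"
proof -
  have "\<forall>i. \<exists>\<tau> p. y i = \<tau> *\<^sub>R u + p \<and> p \<bullet> u = 0 \<and> {s. s *\<^sub>R u + p \<in> A i} \<noteq> {} \<and>
      ennreal \<bar>\<tau>\<bar> \<le> emeasure lebesgue {s. s *\<^sub>R u + p \<in> A i} / 2"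
    using assms by (blast elim: steinerE)
  then show thesis
    using that by (metis choice)
qed

lemma det0_linear_in_axis_coordinates:
  fixes a :: "real^'n^'l" and p :: "'l \<Rightarrow> real^'n" and s :: "'l \<Rightarrow> real" and t :: 'n
  assumes "\<And>i. p i $ t = 0"
  shows "det0 (\<lambda>k. \<Sum>i\<in>UNIV. a$i$k *\<^sub>R (s i *\<^sub>R axis t 1 + p i)) =
    \<bar>\<Sum>i\<in>UNIV. det (\<chi> r. if r = t then (\<chi> k. a$i$k)
                         else (\<chi> k. \<Sum>j\<in>UNIV. a$j$k * p j $ r) :: real^'n^'n) * s i\<bar>"
proof -
  define c where "c = ((\<chi> r k. \<Sum>j\<in>UNIV. a$j$k * p j $ r) :: real^'n^'n)"
  have rows: "(\<chi> r k. (\<Sum>i\<in>UNIV. a$i$k *\<^sub>R (s i *\<^sub>R axis t 1 + p i)) $ r :: real^'n^'n) =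
     (\<chi> r. if r = t then (\<Sum>i\<in>UNIV. s i *s (\<chi> k. a$i$k)) else c $ r)"
    by (simp add: vec_eq_iff c_def sum_component axis_def assms algebra_simps)
  have "det (\<chi> r. if r = t then (\<Sum>i\<in>UNIV. s i *s (\<chi> k. a$i$k)) else c $ r) =
     (\<Sum>i\<in>UNIV. det (\<chi> r. if r = t then s i *s (\<chi> k. a$i$k) else c $ r))"
    by (rule det_linear_row_sum) simp
  also have "\<dots> = (\<Sum>i\<in>UNIV. s i * det (\<chi> r. if r = t then (\<chi> k. a$i$k) else c $ r))"
    by (intro sum.cong refl det_row_mul)
  finally show ?thesis
    unfolding det0_def rows c_def vec_lambda_beta by (simp add: mult.commute)
qed

theorem mainTheorem8:
  fixes a :: "real^'n^'l" and E :: "'l \<Rightarrow> (real^'n) set" and t :: 'n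
  assumes "CARD('l) \<ge> CARD('n)"
    and "\<And>j. E j \<in> sets lebesgue"
    and "\<And>j. emeasure lebesgue (E j) < \<infinity>"
  shows "(SUP y \<in> Pi UNIV (\<lambda>j. steiner (axis t 1) (E j)).
            ereal (det0 (\<lambda>k. \<Sum>i\<in>UNIV. a $ i $ k *\<^sub>R y i)))
         \<le> (SUP y \<in> Pi UNIV E.
            ereal (det0 (\<lambda>k. \<Sum>i\<in>UNIV. a $ i $ k *\<^sub>R y i)))" (is "_ \<le> ?R")
proof (rule SUP_least)
  fix y assume "y \<in> Pi UNIV (\<lambda>j. steiner (axis t 1) (E j))"
  then obtain \<tau> p where y: "\<And>i. y i = \<tau> i *\<^sub>R axis t 1 + p i" and p: "\<And>i. p i \<bullet> axis t 1 = 0"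
    and ne: "\<And>i. {s. s *\<^sub>R axis t 1 + p i \<in> E i} \<noteq> {}"
    and half: "\<And>i. ennreal \<bar>\<tau> i\<bar> \<le> emeasure lebesgue {s. s *\<^sub>R axis t 1 + p i \<in> E i} / 2"
    by (rule Pi_steinerE) blast
  define w where "w i = det (\<chi> r. if r = t then (\<chi> k. a$i$k)
                         else (\<chi> k. \<Sum>j\<in>UNIV. a$j$k * p j $ r) :: real^'n^'n)" for i
  have det_eq: "\<And>s. det0 (\<lambda>k. \<Sum>i\<in>UNIV. a$i$k *\<^sub>R (s i *\<^sub>R axis t 1 + p i)) = \<bar>\<Sum>i\<in>UNIV. w i * s i\<bar>"
    unfolding w_def using p by (intro det0_linear_in_axis_coordinates) (simp add: inner_axis)
  have "ereal (det0 (\<lambda>k. \<Sum>i\<in>UNIV. a $ i $ k *\<^sub>R y i)) = ereal \<bar>\<Sum>i\<in>UNIV. w i * \<tau> i\<bar>"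
    by (simp add: y det_eq)
  also have "\<dots> \<le> (SUP s\<in>Pi UNIV (\<lambda>i. {s. s *\<^sub>R axis t 1 + p i \<in> E i}). ereal \<bar>\<Sum>i\<in>UNIV. w i * s i\<bar>)"
    by (rule abs_linear_form_le_SUP_of_half_measure[OF ne half])
  also have "\<dots> \<le> ?R"
    by (rule SUP_least, subst det_eq[symmetric], rule SUP_upper) auto
  finally show "ereal (det0 (\<lambda>k. \<Sum>i\<in>UNIV. a $ i $ k *\<^sub>R y i)) \<le> ?R" .
qed

end
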